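(* Let $X\in\mathbb{R}^{n\times D}$, labels $y\in\{1,\dots,K\}^n$, sample weights $v\in\mathbb{R}^n$, and consider weighted multiclass logistic regression in variables $W\in\mathbb{R}^{D\times K}$, $b\in\mathbb{R}^K$: $$\min F(W,b)=-\sum_{i=1}^n v_i\log\hat y_{i,y_i},\qquad \hat y_{ic}=\frac{\exp\big(b_c+\sum_{k}X_{ik}W_{kc}\big)}{\sum_{l=1}^K\exp\big(b_l+\sum_kX_{ik}W_{kl}\big)}.$$ Let $\mathcal{Q}$ be a partition of $\{1,\dots,D\}$ and let $\mathcal{P}$ be the partition of $\{1,\dots,n\}$ in which $i_1,i_2$ share a color iff $\sum_{j\in T}X_{i_1j}=\sum_{j\in T}X_{i_2j}$ for all $T\in\mathcal{Q}$. Assume (1) $(\mathcal{P},\mathcal{Q})$ is equitable on $X$; (2) for every $c\in\{1,\dots,K\}$, $\sum_{i=1}^n v_iX_{ij_1}\mathbf{1}\{y_i=c\}=\sum_{i=1}^n v_iX_{ij_2}\mathbf{1}\{y_i=c\}$ whenever $j_1,j_2$ share a color of $\mathcal{Q}$; (3) $v_i$ is constant on each color of $\mathcal{P}$. Then for every $b$ and every $\hat W$ whose rows satisfy $\hat W_{j_1,\cdot}=\hat W_{j_2,\cdot}$ whenever $j_1,j_2$ share a color of $\mathcal{Q}$, we have $\frac{\partial F}{\partial W_{j_1c}}(\hat W,b)=\frac{\partial F}{\partial W_{j_2c}}(\hat W,b)$ for every class $c$ and all $j_1,j_2$ in the same color of $\mathcal{Q}$. Hence the partition of the variables $W_{jc}$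 into colors $T\times\{c\}$ ($T\in\mathcal{Q}$, $c\le K$), together with singletons for each $b_c$, is a reduction coloring.
   Context: A partition of a finite set is a set of nonempty pairwise disjoint subsets ("colors") covering it. A pair $(\mathcal{P},\mathcal{Q})$ of partitions of the row and column indices of $A$ is equitable on $A$ if for every $S\in\mathcal{P}$, $T\in\mathcal{Q}$: $\sum_{j\in T}A_{ij}$ is the same for all $i\in S$ and $\sum_{i\in S}A_{ij}$ is the same for all $j\in T$. A reduction coloring of an unconstrained differentiable convex program $\min F(x)$ is a partition of the variables such that at every point constant on each color, the partial derivatives of $F$ with respect to variables in a common color coincide. *)

theory Defs
  imports "HOL-Library.Disjoint_Sets" "HOL-Analysis.Analysis"
begin

definition equitable :: "(nat \<Rightarrow> nat \<Rightarrow> real) \<Rightarrow> nat set set \<Rightarrow> nat set set \<Rightarrow> bool" where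
  "equitable A P Q \<longleftrightarrow>
     (\<forall>S\<in>P. \<forall>T\<in>Q.
        (\<forall>i1\<in>S. \<forall>i2\<in>S. (\<Sum>j\<in>T. A i1 j) = (\<Sum>j\<in>T. A i2 j)) \<and>
        (\<forall>j1\<in>T. \<forall>j2\<in>T. (\<Sum>i\<in>S. A i j1) = (\<Sum>i\<in>S. A i j2)))"

definition induced_row_partition :: "nat \<Rightarrow> (nat \<Rightarrow> nat \<Rightarrow> real) \<Rightarrow> nat set set \<Rightarrow> nat set set" where
  "induced_row_partition n X Q =
     {{i2 \<in> {1..n}. \<forall>T\<in>Q. (\<Sum>j\<in>T. X i2 j) = (\<Sum>j\<in>T. X i1 j)} | i1. i1 \<in> {1..n}}"

text \<open>Variables: Inl (k,c) is W_{kc}, Inr c is b_c. A point is an assignment of reals to variables.\<close>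
type_synonym lvar = "(nat \<times> nat) + nat"

definition logit :: "nat \<Rightarrow> (nat \<Rightarrow> nat \<Rightarrow> real) \<Rightarrow> (lvar \<Rightarrow> real) \<Rightarrow> nat \<Rightarrow> nat \<Rightarrow> real" where
  "logit D X x i c = x (Inr c) + (\<Sum>k\<in>{1..D}. X i k * x (Inl (k, c)))"

definition yhat :: "nat \<Rightarrow> nat \<Rightarrow> (nat \<Rightarrow> nat \<Rightarrow> real) \<Rightarrow> (lvar \<Rightarrow> real) \<Rightarrow> nat \<Rightarrow> nat \<Rightarrow> real" where
  "yhat D K X x i c = exp (logit D X x i c) / (\<Sum>l\<in>{1..K}. exp (logit D X x i l))"

definition logreg_obj :: "nat \<Rightarrow> nat \<Rightarrow> nat \<Rightarrow> (nat \<Rightarrow> nat \<Rightarrow> real) \<Rightarrow> (nat \<Rightarrow> nat) \<Rightarrow> (nat \<Rightarrow> real)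
    \<Rightarrow> (lvar \<Rightarrow> real) \<Rightarrow> real" where
  "logreg_obj n D K X y v x = - (\<Sum>i\<in>{1..n}. v i * ln (yhat D K X x i (y i)))"

definition has_partial :: "(('v \<Rightarrow> real) \<Rightarrow> real) \<Rightarrow> ('v \<Rightarrow> real) \<Rightarrow> 'v \<Rightarrow> real \<Rightarrow> bool" where
  "has_partial F x u d \<longleftrightarrow> ((\<lambda>t. F (x(u := t))) has_real_derivative d) (at (x u))"

definition partial :: "(('v \<Rightarrow> real) \<Rightarrow> real) \<Rightarrow> ('v \<Rightarrow> real) \<Rightarrow> 'v \<Rightarrow> real" where
  "partial F x u = deriv (\<lambda>t. F (x(u := t))) (x u)"

definition reduction_coloring :: "(('v \<Rightarrow> real) \<Rightarrow> real) \<Rightarrow> 'v set \<Rightarrow> 'v set set \<Rightarrow> bool" where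
  "reduction_coloring F V C \<longleftrightarrow> partition_on V C \<and>
     (\<forall>x. (\<forall>S\<in>C. \<forall>u\<in>S. \<forall>w\<in>S. x u = x w) \<longrightarrow>
          (\<forall>S\<in>C. \<forall>u\<in>S. \<forall>w\<in>S. partial F x u = partial F x w))"

definition logreg_vars :: "nat \<Rightarrow> nat \<Rightarrow> lvar set" where
  "logreg_vars D K = Inl ` ({1..D} \<times> {1..K}) \<union> Inr ` {1..K}"

definition lifted_coloring :: "nat set set \<Rightarrow> nat \<Rightarrow> lvar set set" where
  "lifted_coloring Q K =
     {Inl ` (T \<times> {c}) | T c. T \<in> Q \<and> c \<in> {1..K}} \<union> {{Inr c} | c. c \<in> {1..K}}"

end

theory Submission
  imports Defs
begin

(* The partial derivative of F in W_jc is g_jc = sum_i v_i X_ij (yhat_ic - [y_i = c]).  If W is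
   constant on the colors of Q, the logits of row i depend on i only through its color sums
   sum_{j in T} X_ij, so v_i yhat_ic is constant on each color S of the induced row partition P.
   Splitting sum_i v_i yhat_ic X_ij along P, equitability makes sum_{i in S} X_ij the same for
   all j in a color of Q; the rest of g_jc, sum_i v_i X_ij [y_i = c], is handled by the
   label-balance hypothesis.  Both the logit step (along Q) and the gradient step (along P) are
   instances of one fact: if w is constant on the blocks of a partition, then sum_k a_k w_k
   only depends on the block sums of a. *)

lemma sum_mult_eq_if_block_sums_eq:
  fixes a b w :: "'a \<Rightarrow> 'b::comm_semiring_0"
  assumes "finite A" and "partition_on A P"
    and const: "\<And>p k k'. p \<in> P \<Longrightarrow> k \<in> p \<Longrightarrow> k' \<in> p \<Longrightarrow> w k = w k'"
    and block_sums: "\<And>p. p \<in> P \<Longrightarrow> sum a p = sum b p"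
  shows "(\<Sum>k\<in>A. a k * w k) = (\<Sum>k\<in>A. b k * w k)"
proof -
  have "(\<Sum>k\<in>p. a k * w k) = (\<Sum>k\<in>p. b k * w k)" if p: "p \<in> P" for p
  proof -
    obtain k0 where "k0 \<in> p"
      using p partition_onD3[OF assms(2)] by (metis all_not_in_conv)
    then have "w k = w k0" if "k \<in> p" for k
      using const[OF p] that by blast
    then have "(\<Sum>k\<in>p. f k * w k) = sum f p * w k0" for f :: "'a \<Rightarrow> 'b"
      by (simp add: sum_distrib_right)
    then show ?thesis
      using block_sums[OF p] by simp
  qed
  then have "(\<Sum>p\<in>P. \<Sum>k\<in>p. a k * w k) = (\<Sum>p\<in>P. \<Sum>k\<in>p. b k * w k)"
    by (rule sum.cong[OF refl])
  then show ?thesis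
    by (simp only: sum.partition[OF assms(1,2)])
qed

lemma has_real_derivative_ln_sum_exp:
  fixes z :: "'a \<Rightarrow> real \<Rightarrow> real" and z' :: "'a \<Rightarrow> real"
  assumes "finite L" "L \<noteq> {}" "\<And>l. l \<in> L \<Longrightarrow> (z l has_real_derivative z' l) (at t)"
  shows "((\<lambda>s. ln (\<Sum>l\<in>L. exp (z l s))) has_real_derivative
           (\<Sum>l\<in>L. exp (z l t) * z' l) / (\<Sum>l\<in>L. exp (z l t))) (at t)"
proof -
  have "(\<Sum>l\<in>L. exp (z l t)) > 0"
    using assms(1,2) by (intro sum_pos) auto
  moreover have "((\<lambda>s. \<Sum>l\<in>L. exp (z l s)) has_real_derivative (\<Sum>l\<in>L. exp (z l t) * z' l)) (at t)"
    using assms(3) by (intro DERIV_sum DERIV_fun_exp)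
  ultimately show ?thesis
    using DERIV_chain2[OF DERIV_ln_divide] by (simp add: divide_simps)
qed

lemma has_partial_imp_partial:
  assumes "has_partial F x u d"
  shows "partial F x u = d"
  using assms unfolding has_partial_def partial_def by (rule DERIV_imp_deriv)

lemma partition_on_induced_row_partition:
  "partition_on {1..n} (induced_row_partition n X Q)"
proof -
  define cls where "cls i = {i' \<in> {1..n}. \<forall>T\<in>Q. (\<Sum>j\<in>T. X i' j) = (\<Sum>j\<in>T. X i j)}" for i
  have P: "induced_row_partition n X Q = cls ` {1..n}"
    unfolding induced_row_partition_def cls_def by blast
  have self: "i \<in> cls i" if "i \<in> {1..n}" for i
    using that by (simp add: cls_def)
  have sub: "cls i \<subseteq> {1..n}" for i
    by (auto simp: cls_def)
  have disj: "disjnt (cls i) (cls i')" if "cls i \<noteq> cls i'" for i i'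
    using that unfolding cls_def disjnt_def by force
  show ?thesis
    unfolding P
  proof (rule partition_onI)
    show "\<Union>(cls ` {1..n}) = {1..n}"
      using self sub by blast
    show "{} \<notin> cls ` {1..n}"
      using self by blast
  qed (use disj in blast)
qed

lemma induced_row_partition_row_sums_eq:
  assumes "S \<in> induced_row_partition n X Q" and "i1 \<in> S" and "i2 \<in> S"
  shows "\<forall>T\<in>Q. (\<Sum>j\<in>T. X i1 j) = (\<Sum>j\<in>T. X i2 j)"
  using assms unfolding induced_row_partition_def by force

lemma logit_eq_if_row_sums_eq:
  assumes "partition_on {1..D} Q"
    and "\<forall>T\<in>Q. \<forall>j1\<in>T. \<forall>j2\<in>T. x (Inl (j1, l)) = x (Inl (j2, l))"
    and "\<forall>T\<in>Q. (\<Sum>j\<in>T. X i1 j) = (\<Sum>j\<in>T. X i2 j)"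
  shows "logit D X x i1 l = logit D X x i2 l"
proof -
  have "(\<Sum>k\<in>{1..D}. X i1 k * x (Inl (k, l))) = (\<Sum>k\<in>{1..D}. X i2 k * x (Inl (k, l)))"
    using assms(2,3) by (intro sum_mult_eq_if_block_sums_eq[OF _ assms(1)]) blast+
  then show ?thesis
    by (simp add: logit_def)
qed

lemma yhat_eq_if_row_sums_eq:
  assumes "partition_on {1..D} Q"
    and "\<forall>T\<in>Q. \<forall>j1\<in>T. \<forall>j2\<in>T. \<forall>l\<in>{1..K}. x (Inl (j1, l)) = x (Inl (j2, l))"
    and "\<forall>T\<in>Q. (\<Sum>j\<in>T. X i1 j) = (\<Sum>j\<in>T. X i2 j)"
    and "c \<in> {1..K}"
  shows "yhat D K X x i1 c = yhat D K X x i2 c"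
proof -
  have "logit D X x i1 l = logit D X x i2 l" if "l \<in> {1..K}" for l
    using assms(1-3) that by (intro logit_eq_if_row_sums_eq) blast+
  then show ?thesis
    using assms(4) by (simp add: yhat_def)
qed

lemma logit_fun_upd_Inl:
  assumes "j \<in> {1..D}"
  shows "logit D X (x(Inl (j, c) := t)) i l =
         logit D X x i l + (if l = c then X i j * (t - x (Inl (j, c))) else 0)"
proof -
  have "(\<Sum>k\<in>{1..D}. X i k * (x(Inl (j, c) := t)) (Inl (k, l))) =
        (\<Sum>k\<in>{1..D}. X i k * x (Inl (k, l)) +
           (if k = j \<and> l = c then X i j * (t - x (Inl (j, c))) else 0))"
    by (rule sum.cong) (auto simp: algebra_simps)
  also have "\<dots> = (\<Sum>k\<in>{1..D}. X i k * x (Inl (k, l))) +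
                   (if l = c then X i j * (t - x (Inl (j, c))) else 0)"
    using assms by (simp add: sum.distrib)
  finally show ?thesis
    by (simp add: logit_def)
qed

lemma ln_yhat:
  assumes "0 < K"
  shows "ln (yhat D K X x i c) = logit D X x i c - ln (\<Sum>l\<in>{1..K}. exp (logit D X x i l))"
proof -
  have "(\<Sum>l\<in>{1..K}. exp (logit D X x i l)) > 0"
    using assms by (intro sum_pos) auto
  then show ?thesis
    by (simp add: yhat_def ln_div)
qed

definition logreg_grad_W :: "nat \<Rightarrow> nat \<Rightarrow> nat \<Rightarrow> (nat \<Rightarrow> nat \<Rightarrow> real) \<Rightarrow> (nat \<Rightarrow> nat)
    \<Rightarrow> (nat \<Rightarrow> real) \<Rightarrow> (lvar \<Rightarrow> real) \<Rightarrow> nat \<Rightarrow> nat \<Rightarrow> real" where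
  "logreg_grad_W n D K X y v x j c =
     (\<Sum>i\<in>{1..n}. v i * X i j * (yhat D K X x i c - (if y i = c then 1 else 0)))"

lemma has_partial_logreg_obj_Inl:
  assumes j: "j \<in> {1..D}" and c: "c \<in> {1..K}"
  shows "has_partial (logreg_obj n D K X y v) x (Inl (j, c)) (logreg_grad_W n D K X y v x j c)"
proof -
  define a where "a = x (Inl (j, c))"
  define xt where "xt t = x(Inl (j, c) := t)" for t
  have xt_a: "xt a = x"
    by (simp add: xt_def a_def)
  have obj: "logreg_obj n D K X y v (xt t) =
      - (\<Sum>i\<in>{1..n}. v i * (logit D X (xt t) i (y i) - ln (\<Sum>l\<in>{1..K}. exp (logit D X (xt t) i l))))"
    for t using c by (simp add: logreg_obj_def ln_yhat)
  have d_logit: "((\<lambda>t. logit D X (xt t) i l) has_real_derivative (if l = c then X i j else 0)) (at a)"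
    for i l unfolding xt_def logit_fun_upd_Inl[OF j] by (auto intro!: derivative_eq_intros)
  have d_lse: "((\<lambda>t. ln (\<Sum>l\<in>{1..K}. exp (logit D X (xt t) i l))) has_real_derivative
      X i j * yhat D K X x i c) (at a)" for i
  proof -
    have "(\<Sum>l\<in>{1..K}. exp (logit D X x i l) * (if l = c then X i j else 0)) =
          exp (logit D X x i c) * X i j"
      using c by (simp add: if_distrib[of "\<lambda>u. _ * u"] cong: if_cong)
    moreover have "((\<lambda>t. ln (\<Sum>l\<in>{1..K}. exp (logit D X (xt t) i l))) has_real_derivative
        (\<Sum>l\<in>{1..K}. exp (logit D X x i l) * (if l = c then X i j else 0)) /
        (\<Sum>l\<in>{1..K}. exp (logit D X x i l))) (at a)"
      using has_real_derivative_ln_sum_exp[OF _ _ d_logit, of "{1..K}"] c by (simp add: xt_a)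
    ultimately show ?thesis
      by (simp add: yhat_def ac_simps)
  qed
  have "((\<lambda>t. logreg_obj n D K X y v (xt t)) has_real_derivative
      - (\<Sum>i\<in>{1..n}. v i * ((if y i = c then X i j else 0) - X i j * yhat D K X x i c))) (at a)"
    unfolding obj by (intro DERIV_minus DERIV_sum DERIV_cmult DERIV_diff d_logit d_lse)
  moreover have "- (\<Sum>i\<in>{1..n}. v i * ((if y i = c then X i j else 0) - X i j * yhat D K X x i c)) =
      logreg_grad_W n D K X y v x j c"
    unfolding logreg_grad_W_def sum_negf[symmetric] by (rule sum.cong) (auto simp: algebra_simps)
  ultimately show ?thesis
    unfolding has_partial_def xt_def a_def by simp
qed

lemma logreg_grad_W_eq_on_block:
  assumes Q_part: "partition_on {1..D} Q"
    and eq: "equitable X (induced_row_partition n X Q) Q"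
    and lab_bal: "\<forall>c\<in>{1..K}. \<forall>T\<in>Q. \<forall>j1\<in>T. \<forall>j2\<in>T.
        (\<Sum>i\<in>{1..n}. v i * X i j1 * (if y i = c then 1 else 0)) =
        (\<Sum>i\<in>{1..n}. v i * X i j2 * (if y i = c then 1 else 0))"
    and v_const: "\<forall>S\<in>induced_row_partition n X Q. \<forall>i1\<in>S. \<forall>i2\<in>S. v i1 = v i2"
    and x_const: "\<forall>T\<in>Q. \<forall>j1\<in>T. \<forall>j2\<in>T. \<forall>l\<in>{1..K}. x (Inl (j1, l)) = x (Inl (j2, l))"
    and T: "T \<in> Q" and j1: "j1 \<in> T" and j2: "j2 \<in> T" and c: "c \<in> {1..K}"
  shows "logreg_grad_W n D K X y v x j1 c = logreg_grad_W n D K X y v x j2 c"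
proof -
  let ?P = "induced_row_partition n X Q"
  have split: "logreg_grad_W n D K X y v x j c =
      (\<Sum>i\<in>{1..n}. X i j * (v i * yhat D K X x i c)) -
      (\<Sum>i\<in>{1..n}. v i * X i j * (if y i = c then 1 else 0))" for j
    unfolding logreg_grad_W_def sum_subtractf[symmetric] by (rule sum.cong) (auto simp: algebra_simps)
  have "(\<Sum>i\<in>{1..n}. X i j1 * (v i * yhat D K X x i c)) =
        (\<Sum>i\<in>{1..n}. X i j2 * (v i * yhat D K X x i c))"
  proof (rule sum_mult_eq_if_block_sums_eq[OF _ partition_on_induced_row_partition])
    fix S i i' assume S: "S \<in> ?P" "i \<in> S" "i' \<in> S"
    have "v i = v i'"
      using v_const S by blast
    moreover have "yhat D K X x i c = yhat D K X x i' c"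
      using yhat_eq_if_row_sums_eq[OF Q_part x_const induced_row_partition_row_sums_eq[OF S] c] .
    ultimately show "v i * yhat D K X x i c = v i' * yhat D K X x i' c"
      by simp
  next
    fix S assume "S \<in> ?P"
    then show "(\<Sum>i\<in>S. X i j1) = (\<Sum>i\<in>S. X i j2)"
      using eq T j1 j2 unfolding equitable_def by blast
  qed simp
  then show ?thesis
    unfolding split using lab_bal[rule_format, OF c T j1 j2] by simp
qed

lemma lifted_coloringE:
  assumes "S \<in> lifted_coloring Q K"
  obtains (Inl_color) T c where "T \<in> Q" "c \<in> {1..K}" "S = Inl ` (T \<times> {c})"
    | (Inr_color) c where "c \<in> {1..K}" "S = {Inr c}"
  using assms unfolding lifted_coloring_def by blast

lemma lifted_coloring_InlI:
  assumes "T \<in> Q" and "c \<in> {1..K}"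
  shows "Inl ` (T \<times> {c}) \<in> lifted_coloring Q K"
  using assms unfolding lifted_coloring_def by blast

lemma partition_on_lifted_coloring:
  assumes Q_part: "partition_on {1..D} Q"
  shows "partition_on (logreg_vars D K) (lifted_coloring Q K)"
proof (rule partition_onI)
  have "lifted_coloring Q K =
      (\<lambda>(T, c). Inl ` (T \<times> {c})) ` (Q \<times> {1..K}) \<union> (\<lambda>c. {Inr c}) ` {1..K}"
    unfolding lifted_coloring_def by (auto simp: image_iff) fast
  then show "\<Union>(lifted_coloring Q K) = logreg_vars D K"
    using partition_onD1[OF Q_part] unfolding logreg_vars_def by auto
  show "{} \<notin> lifted_coloring Q K"
    using partition_onD3[OF Q_part] by (auto elim: lifted_coloringE)
  fix p q assume p: "p \<in> lifted_coloring Q K" and q: "q \<in> lifted_coloring Q K" and "p \<noteq> q"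
  have Q_disj: "disjnt T T'" if "T \<in> Q" "T' \<in> Q" "T \<noteq> T'" for T T'
    using partition_onD2[OF Q_part] that by (simp add: pairwise_def)
  from p show "disjnt p q"
  proof (cases rule: lifted_coloringE)
    case (Inl_color T c)
    from q show ?thesis
    proof (cases rule: lifted_coloringE)
      case (Inl_color T' c')
      then have "disjnt T T' \<or> c \<noteq> c'"
        using \<open>p \<noteq> q\<close> \<open>p = Inl ` (T \<times> {c})\<close> \<open>T \<in> Q\<close> Q_disj by blast
      then show ?thesis
        using \<open>p = Inl ` (T \<times> {c})\<close> \<open>q = Inl ` (T' \<times> {c'})\<close> by (auto simp: disjnt_def)
    qed (use \<open>p = Inl ` (T \<times> {c})\<close> in auto)
  next
    case (Inr_color c)
    from q show ?thesis
      by (cases rule: lifted_coloringE) (use \<open>p = {Inr c}\<close> \<open>p \<noteq> q\<close> in auto)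
  qed
qed

lemma reduction_coloring_lifted_coloringI:
  assumes Q_part: "partition_on {1..D} Q"
    and common_partial: "\<And>x. \<forall>T\<in>Q. \<forall>j1\<in>T. \<forall>j2\<in>T. \<forall>c\<in>{1..K}. x (Inl (j1, c)) = x (Inl (j2, c))
      \<Longrightarrow> \<forall>T\<in>Q. \<forall>j1\<in>T. \<forall>j2\<in>T. \<forall>c\<in>{1..K}. \<exists>d.
            has_partial F x (Inl (j1, c)) d \<and> has_partial F x (Inl (j2, c)) d"
  shows "reduction_coloring F (logreg_vars D K) (lifted_coloring Q K)"
proof -
  have partials_eq: "\<forall>S\<in>lifted_coloring Q K. \<forall>u\<in>S. \<forall>w\<in>S. partial F x u = partial F x w"
    if x_const: "\<forall>S\<in>lifted_coloring Q K. \<forall>u\<in>S. \<forall>w\<in>S. x u = x w" for x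
  proof (intro ballI)
    fix S u w assume S: "S \<in> lifted_coloring Q K" and u: "u \<in> S" and w: "w \<in> S"
    have "\<forall>T\<in>Q. \<forall>j1\<in>T. \<forall>j2\<in>T. \<forall>c\<in>{1..K}. x (Inl (j1, c)) = x (Inl (j2, c))"
    proof (intro ballI)
      fix T j1 j2 c assume "T \<in> Q" "j1 \<in> T" "j2 \<in> T" "c \<in> {1..K}"
      then have "Inl ` (T \<times> {c}) \<in> lifted_coloring Q K"
        and "Inl (j1, c) \<in> Inl ` (T \<times> {c})" "Inl (j2, c) \<in> Inl ` (T \<times> {c})"
        by (simp_all add: lifted_coloring_InlI)
      then show "x (Inl (j1, c)) = x (Inl (j2, c))"
        by (rule x_const[rule_format])
    qed
    note block_partials = common_partial[OF this]
    from S show "partial F x u = partial F x w"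
    proof (cases rule: lifted_coloringE)
      case (Inl_color T c)
      then obtain j1 j2 where j: "j1 \<in> T" "j2 \<in> T" and uw: "u = Inl (j1, c)" "w = Inl (j2, c)"
        using u w by auto
      obtain d where "has_partial F x (Inl (j1, c)) d" "has_partial F x (Inl (j2, c)) d"
        using block_partials Inl_color(1,2) j by blast
      then show ?thesis
        unfolding uw by (simp add: has_partial_imp_partial)
    qed (use u w in simp)
  qed
  show ?thesis
    unfolding reduction_coloring_def
    by (intro conjI allI impI partition_on_lifted_coloring[OF Q_part]) (erule partials_eq)
qed

theorem theorem5:
  fixes n D K :: nat and X :: "nat \<Rightarrow> nat \<Rightarrow> real" and y :: "nat \<Rightarrow> nat"
    and v :: "nat \<Rightarrow> real" and Q :: "nat set set"
  assumes labels: "\<forall>i\<in>{1..n}. y i \<in> {1..K}"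
    and Q_part: "partition_on {1..D} Q"
    and eq: "equitable X (induced_row_partition n X Q) Q"
    and lab_bal: "\<forall>c\<in>{1..K}. \<forall>T\<in>Q. \<forall>j1\<in>T. \<forall>j2\<in>T.
        (\<Sum>i\<in>{1..n}. v i * X i j1 * (if y i = c then 1 else 0)) =
        (\<Sum>i\<in>{1..n}. v i * X i j2 * (if y i = c then 1 else 0))"
    and v_const: "\<forall>S\<in>induced_row_partition n X Q. \<forall>i1\<in>S. \<forall>i2\<in>S. v i1 = v i2"
  shows "(\<forall>x. (\<forall>T\<in>Q. \<forall>j1\<in>T. \<forall>j2\<in>T. \<forall>c\<in>{1..K}. x (Inl (j1, c)) = x (Inl (j2, c))) \<longrightarrow>
            (\<forall>T\<in>Q. \<forall>j1\<in>T. \<forall>j2\<in>T. \<forall>c\<in>{1..K}. \<exists>d.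
               has_partial (logreg_obj n D K X y v) x (Inl (j1, c)) d \<and>
               has_partial (logreg_obj n D K X y v) x (Inl (j2, c)) d))
         \<and> reduction_coloring (logreg_obj n D K X y v) (logreg_vars D K) (lifted_coloring Q K)"
proof -
  let ?F = "logreg_obj n D K X y v"
  have common_partial: "\<forall>T\<in>Q. \<forall>j1\<in>T. \<forall>j2\<in>T. \<forall>c\<in>{1..K}. \<exists>d.
      has_partial ?F x (Inl (j1, c)) d \<and> has_partial ?F x (Inl (j2, c)) d"
    if x_const: "\<forall>T\<in>Q. \<forall>j1\<in>T. \<forall>j2\<in>T. \<forall>c\<in>{1..K}. x (Inl (j1, c)) = x (Inl (j2, c))" for x
  proof (intro ballI)
    fix T j1 j2 c assume block: "T \<in> Q" "j1 \<in> T" "j2 \<in> T" and c: "c \<in> {1..K}"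
    have "j1 \<in> {1..D}" "j2 \<in> {1..D}"
      using partition_onD1[OF Q_part] block by auto
    then have "has_partial ?F x (Inl (j1, c)) (logreg_grad_W n D K X y v x j1 c)"
      and "has_partial ?F x (Inl (j2, c)) (logreg_grad_W n D K X y v x j2 c)"
      using c by (auto intro: has_partial_logreg_obj_Inl)
    moreover have "logreg_grad_W n D K X y v x j1 c = logreg_grad_W n D K X y v x j2 c"
      by (rule logreg_grad_W_eq_on_block[OF Q_part eq lab_bal v_const x_const block c])
    ultimately show "\<exists>d. has_partial ?F x (Inl (j1, c)) d \<and> has_partial ?F x (Inl (j2, c)) d"
      by auto
  qed
  show ?thesis
    by (intro conjI allI impI reduction_coloring_lifted_coloringI[OF Q_part]) (erule common_partial)+
qed

end
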